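(* Let $N\ge 1$ and $K\ge 2$ be integers with $K$ even and $N$ divisible by $K$, put $m=N/K$, and let $\alpha\in[0,2]$. Let $S_0\subset S$ be the set of the $2m+1$ pure strategies $s^{(j)}=(j,\,2m-j,\,j,\,2m-j,\,\ldots,\,j,\,2m-j)'$ for $j=0,1,\ldots,2m$ (odd-indexed battlefields receive $j$, even-indexed battlefields receive $2m-j$). Then the mixed strategy that randomizes uniformly over $S_0$ is a symmetric equilibrium strategy of $\mathcal{B}_\alpha(N,K)$, and in the resulting equilibrium each player's expected payoff equals $\pi^*=K\cdot\frac{m+\alpha/2}{2m+1}$.
   Context: Fix integers $N\ge1$, $K\ge2$ and a real number $\alpha$. The Colonel Blotto game $\mathcal{B}_\alpha(N,K)$ is the two-player simultaneous-move game with players $A,B$, each with pure strategy set $S=\{s\in\{0,1,\ldots,N\}^K:\sum_{k=1}^K s_k=N\}$, in which the payoff of player $i$ at the pure profile $(s^i,s^{-i})$ is $\pi^i(s^i,s^{-i})=\sum_{k=1}^K\big(\mathbf 1[s^i_k>s^{-i}_k]+\tfrac{\alpha}{2}\mathbf 1[s^i_k=s^{-i}_k]\big)$ (here $-i$ denotes the opponent of $i$). Mixed strategies are probability distributions on $S$, and payoffs of mixed profiles are expected payoffs (players randomize independently). A Nash equilibrium is a mixed profile from which no player can raise her expected payoff by a unilateral deviation. A symmetric equilibrium strategy is a mixed strategy $\sigma$ such that $(\sigma,\sigma)$ is a Nash equilibrium. *)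

theory Defs
  imports "HOL-Probability.Probability"
begin

text \<open>Pure strategies: allocations s over battlefields indexed 0..K-1 (battlefield k+1 of the
paper is index k), represented as functions nat => nat that vanish outside {0..<K}.\<close>

definition pure_strats :: "nat \<Rightarrow> nat \<Rightarrow> (nat \<Rightarrow> nat) set" where
  "pure_strats N K = {s. (\<forall>k. k \<ge> K \<longrightarrow> s k = 0) \<and> (\<forall>k<K. s k \<le> N) \<and> (\<Sum>k<K. s k) = N}"

definition blotto_payoff :: "real \<Rightarrow> nat \<Rightarrow> (nat \<Rightarrow> nat) \<Rightarrow> (nat \<Rightarrow> nat) \<Rightarrow> real" where
  "blotto_payoff \<alpha> K s t =
     (\<Sum>k<K. (if s k > t k then 1 else 0) + (\<alpha> / 2) * (if s k = t k then 1 else 0))"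

definition mixed_strats :: "nat \<Rightarrow> nat \<Rightarrow> (nat \<Rightarrow> nat) pmf set" where
  "mixed_strats N K = {p. set_pmf p \<subseteq> pure_strats N K}"

definition exp_payoff :: "real \<Rightarrow> nat \<Rightarrow> (nat \<Rightarrow> nat) pmf \<Rightarrow> (nat \<Rightarrow> nat) pmf \<Rightarrow> real" where
  "exp_payoff \<alpha> K p q =
     measure_pmf.expectation (pair_pmf p q) (\<lambda>(s, t). blotto_payoff \<alpha> K s t)"

definition nash_eq :: "real \<Rightarrow> nat \<Rightarrow> nat \<Rightarrow> (nat \<Rightarrow> nat) pmf \<Rightarrow> (nat \<Rightarrow> nat) pmf \<Rightarrow> bool" where
  "nash_eq \<alpha> N K pA pB \<longleftrightarrow>
     pA \<in> mixed_strats N K \<and> pB \<in> mixed_strats N K \<and>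
     (\<forall>q \<in> mixed_strats N K. exp_payoff \<alpha> K q pB \<le> exp_payoff \<alpha> K pA pB) \<and>
     (\<forall>q \<in> mixed_strats N K. exp_payoff \<alpha> K q pA \<le> exp_payoff \<alpha> K pB pA)"

definition symmetric_eq_strategy :: "real \<Rightarrow> nat \<Rightarrow> nat \<Rightarrow> (nat \<Rightarrow> nat) pmf \<Rightarrow> bool" where
  "symmetric_eq_strategy \<alpha> N K \<sigma> \<longleftrightarrow> nash_eq \<alpha> N K \<sigma> \<sigma>"

text \<open>The strategy s^(j): odd-indexed battlefields (1,3,..; indices 0,2,..) get j,
  even-indexed battlefields get 2m-j.\<close>
definition s_alt :: "nat \<Rightarrow> nat \<Rightarrow> nat \<Rightarrow> (nat \<Rightarrow> nat)" where
  "s_alt K m j = (\<lambda>k. if k < K then (if even k then j else 2 * m - j) else 0)"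

end

theory Submission
  imports Defs
begin

text \<open>
  Against the uniform distribution on \<open>S0\<close>, a battlefield receiving \<open>x\<close> units meets each of the
  allocations \<open>0, \<dots>, 2m\<close> exactly once, so it wins \<open>min x (2m+1)\<close> times and ties once if
  \<open>x \<le> 2m\<close>. Summing over battlefields, every pure strategy scores at most \<open>N + K\<alpha>/2\<close> in
  total, with equality for all strategies that put at most \<open>2m\<close> units everywhere, in particular for
  the members of \<open>S0\<close>. Hence no deviation beats \<open>S0\<close>'s own payoff \<open>(N + K\<alpha>/2)/(2m+1)\<close>.
\<close>

lemma finite_pure_strats: "finite (pure_strats N K)"
proof (rule finite_subset)
  show "pure_strats N K \<subseteq> {s. \<forall>k. (k \<in> {..<K} \<longrightarrow> s k \<in> {..N}) \<and> (k \<notin> {..<K} \<longrightarrow> s k = 0)}"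
    by (auto simp: pure_strats_def)
qed (rule finite_set_of_finite_funs; simp)

lemma exp_payoff_pmf_of_set_right:
  assumes "finite (set_pmf q)" and "finite S" and "S \<noteq> {}"
  shows "exp_payoff \<alpha> K q (pmf_of_set S) =
         measure_pmf.expectation q (\<lambda>s. \<Sum>t\<in>S. blotto_payoff \<alpha> K s t) / card S"
proof -
  have "exp_payoff \<alpha> K q (pmf_of_set S) =
        (\<Sum>(s, t)\<in>set_pmf q \<times> S. blotto_payoff \<alpha> K s t * pmf (pair_pmf q (pmf_of_set S)) (s, t))"
    unfolding exp_payoff_def
    by (subst integral_measure_pmf_real[where A = "set_pmf q \<times> S"]) (use assms in \<open>auto simp: case_prod_beta\<close>)
  also have "\<dots> = (\<Sum>s\<in>set_pmf q. (\<Sum>t\<in>S. blotto_payoff \<alpha> K s t) * pmf q s) / card S"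
    by (simp add: sum.cartesian_product[symmetric] pmf_pair assms sum_divide_distrib sum_distrib_right)
  also have "\<dots> = measure_pmf.expectation q (\<lambda>s. \<Sum>t\<in>S. blotto_payoff \<alpha> K s t) / card S"
    by (simp add: integral_measure_pmf_real[where A = "set_pmf q"] assms)
  finally show ?thesis .
qed

lemma symmetric_eq_strategy_pmf_of_set:
  fixes S :: "(nat \<Rightarrow> nat) set" and \<alpha> c :: real and N K :: nat
  defines "score s \<equiv> \<Sum>t\<in>S. blotto_payoff \<alpha> K s t"
  assumes "S \<subseteq> pure_strats N K" and "S \<noteq> {}"
    and "\<And>s. s \<in> pure_strats N K \<Longrightarrow> score s \<le> c"
    and "\<And>s. s \<in> S \<Longrightarrow> score s = c"
  shows "symmetric_eq_strategy \<alpha> N K (pmf_of_set S)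
         \<and> exp_payoff \<alpha> K (pmf_of_set S) (pmf_of_set S) = c / card S"
proof -
  have "finite S" using assms(2) finite_pure_strats finite_subset by blast
  have finite_support: "finite (set_pmf q)" if "q \<in> mixed_strats N K" for q
    using that finite_pure_strats finite_subset unfolding mixed_strats_def by blast
  have mixed: "pmf_of_set S \<in> mixed_strats N K"
    using assms(2,3) \<open>finite S\<close> by (simp add: mixed_strats_def)
  have deviation: "exp_payoff \<alpha> K q (pmf_of_set S) \<le> c / card S" if "q \<in> mixed_strats N K" for q
  proof -
    have "measure_pmf.expectation q score \<le> c"
      using that assms(4) finite_support[OF that]
      by (intro measure_pmf.integral_le_const integrable_measure_pmf_finite AE_pmfI)
        (auto simp: mixed_strats_def)
    then show ?thesis
      using exp_payoff_pmf_of_set_right[OF finite_support[OF that] \<open>finite S\<close> assms(3)]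
      unfolding score_def by (simp add: divide_right_mono)
  qed
  have "measure_pmf.expectation (pmf_of_set S) score = c"
    using assms(3,5) \<open>finite S\<close> by (simp add: integral_pmf_of_set)
  then have equilibrium_value: "exp_payoff \<alpha> K (pmf_of_set S) (pmf_of_set S) = c / card S"
    using exp_payoff_pmf_of_set_right[OF finite_support[OF mixed] \<open>finite S\<close> assms(3)]
    unfolding score_def by simp
  show ?thesis
    using mixed deviation equilibrium_value
    by (simp add: symmetric_eq_strategy_def nash_eq_def)
qed

lemma sum_win_tie_atLeast0_atMost:
  fixes x M :: nat and a :: real
  shows "(\<Sum>j\<in>{0..M}. (if x > j then 1 else 0) + a * (if x = j then 1 else 0)) =
         real (min x (M + 1)) + a * (if x \<le> M then 1 else 0)"
  by (induction M) (auto simp: min_def)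

lemma sum_alternating_even_length:
  fixes a b r :: nat
  shows "(\<Sum>k<2 * r. if even k then a else b) = r * (a + b)"
  by (induction r) auto

lemma s_alt_in_pure_strats:
  assumes "even K" and "j \<le> 2 * m"
  shows "s_alt K m j \<in> pure_strats (K * m) K"
proof -
  obtain r where K: "K = 2 * r" using assms(1) by blast
  have "(\<Sum>k<K. s_alt K m j k) = (\<Sum>k<2 * r. if even k then j else 2 * m - j)"
    by (simp add: K s_alt_def)
  also have "\<dots> = K * m"
    using sum_alternating_even_length[where a = j and b = "2 * m - j" and r = r] assms(2) by (simp add: K)
  finally have "(\<Sum>k<K. s_alt K m j k) = K * m" .
  moreover have "s_alt K m j k \<le> K * m" if "k < K" for k
  proof -
    have "s_alt K m j k \<le> 2 * m" using assms(2) by (simp add: s_alt_def)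
    also have "\<dots> \<le> K * m" using that K by simp
    finally show ?thesis .
  qed
  ultimately show ?thesis
    by (auto simp: pure_strats_def s_alt_def)
qed

lemma inj_on_s_alt:
  assumes "0 < K"
  shows "inj_on (s_alt K m) {0..2 * m}"
proof (rule inj_onI)
  fix i j assume "s_alt K m i = s_alt K m j"
  then have "s_alt K m i 0 = s_alt K m j 0" by simp
  then show "i = j" using assms by (simp add: s_alt_def)
qed

lemma sum_blotto_payoff_s_alt:
  fixes K m :: nat and \<alpha> :: real and s :: "nat \<Rightarrow> nat"
  shows "(\<Sum>j\<in>{0..2 * m}. blotto_payoff \<alpha> K s (s_alt K m j)) =
   (\<Sum>k<K. real (min (s k) (2 * m + 1)) + \<alpha> / 2 * (if s k \<le> 2 * m then 1 else 0))"
proof -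
  have battlefield:
    "(\<Sum>j\<in>{0..2 * m}. (if s k > s_alt K m j k then 1 else 0) + \<alpha> / 2 * (if s k = s_alt K m j k then 1 else 0)) =
     real (min (s k) (2 * m + 1)) + \<alpha> / 2 * (if s k \<le> 2 * m then 1 else 0)" if "k < K" for k
  proof (cases "even k")
    case True
    then show ?thesis
      using that sum_win_tie_atLeast0_atMost[where x = "s k" and M = "2 * m" and a = "\<alpha> / 2"] by (simp add: s_alt_def)
  next
    case False
    \<comment> \<open>reversing the opponent's allocation \<open>2m - j\<close> reduces to the even case\<close>
    then show ?thesis
      using that sum_win_tie_atLeast0_atMost[where x = "s k" and M = "2 * m" and a = "\<alpha> / 2"]
        sum.atLeastAtMost_rev[where g = "\<lambda>j. (if s k > j then 1 else 0) + \<alpha> / 2 * (if s k = j then 1 else 0)" and n = 0 and m = "2 * m"]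
      by (simp add: s_alt_def)
  qed
  show ?thesis
    unfolding blotto_payoff_def
    by (subst sum.swap) (rule sum.cong[OF refl], rule battlefield, simp)
qed

lemma sum_blotto_payoff_s_alt_le:
  fixes \<alpha> :: real
  assumes "0 \<le> \<alpha>" and "s \<in> pure_strats N K"
  shows "(\<Sum>j\<in>{0..2 * m}. blotto_payoff \<alpha> K s (s_alt K m j)) \<le> N + K * \<alpha> / 2"
proof -
  have "(\<Sum>j\<in>{0..2 * m}. blotto_payoff \<alpha> K s (s_alt K m j)) \<le> (\<Sum>k<K. real (s k) + \<alpha> / 2)"
    unfolding sum_blotto_payoff_s_alt using assms(1) by (intro sum_mono) auto
  also have "\<dots> = N + K * \<alpha> / 2"
    using assms(2) by (simp add: sum.distrib pure_strats_def flip: of_nat_sum)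
  finally show ?thesis .
qed

lemma sum_blotto_payoff_s_alt_eq:
  fixes \<alpha> :: real
  assumes "s \<in> pure_strats N K" and "\<And>k. s k \<le> 2 * m"
  shows "(\<Sum>j\<in>{0..2 * m}. blotto_payoff \<alpha> K s (s_alt K m j)) = N + K * \<alpha> / 2"
proof -
  have "(\<Sum>j\<in>{0..2 * m}. blotto_payoff \<alpha> K s (s_alt K m j)) = (\<Sum>k<K. real (s k) + \<alpha> / 2)"
    unfolding sum_blotto_payoff_s_alt using assms(2) by (intro sum.cong) (auto simp: min_def le_Suc_eq)
  also have "\<dots> = N + K * \<alpha> / 2"
    using assms(1) by (simp add: sum.distrib pure_strats_def flip: of_nat_sum)
  finally show ?thesis .
qed

theorem proposition1:
  fixes N K m :: nat and \<alpha> :: real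
  assumes "N \<ge> 1" and "K \<ge> 2" and "even K" and "K dvd N" and "m = N div K"
    and "0 \<le> \<alpha>" and "\<alpha> \<le> 2"
  defines "S0 \<equiv> s_alt K m ` {0..2 * m}"
  shows "S0 \<subseteq> pure_strats N K \<and> card S0 = 2 * m + 1 \<and>
         symmetric_eq_strategy \<alpha> N K (pmf_of_set S0) \<and>
         exp_payoff \<alpha> K (pmf_of_set S0) (pmf_of_set S0) = K * ((m + \<alpha> / 2) / (2 * m + 1))"
proof -
  have N: "N = K * m" using assms(4,5) by simp
  have inj: "inj_on (s_alt K m) {0..2 * m}" using assms(2) by (intro inj_on_s_alt) simp
  have S0_pure: "S0 \<subseteq> pure_strats N K"
    unfolding S0_def N using assms(3) by (auto intro: s_alt_in_pure_strats)
  have card_S0: "card S0 = 2 * m + 1"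
    unfolding S0_def by (simp add: card_image[OF inj])
  have score: "(\<Sum>t\<in>S0. blotto_payoff \<alpha> K s t) = (\<Sum>j\<in>{0..2 * m}. blotto_payoff \<alpha> K s (s_alt K m j))" for s
    unfolding S0_def by (simp add: sum.reindex[OF inj])
  have "symmetric_eq_strategy \<alpha> N K (pmf_of_set S0) \<and>
        exp_payoff \<alpha> K (pmf_of_set S0) (pmf_of_set S0) = (N + K * \<alpha> / 2) / card S0"
  proof (rule symmetric_eq_strategy_pmf_of_set[OF S0_pure])
    show "S0 \<noteq> {}" unfolding S0_def by simp
    show "(\<Sum>t\<in>S0. blotto_payoff \<alpha> K s t) \<le> N + K * \<alpha> / 2" if "s \<in> pure_strats N K" for s
      unfolding score using sum_blotto_payoff_s_alt_le[OF assms(6) that] .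
    show "(\<Sum>t\<in>S0. blotto_payoff \<alpha> K s t) = N + K * \<alpha> / 2" if "s \<in> S0" for s
    proof -
      have "s k \<le> 2 * m" for k
        using that by (auto simp: S0_def s_alt_def)
      then show ?thesis
        unfolding score using that S0_pure by (intro sum_blotto_payoff_s_alt_eq) auto
    qed
  qed
  moreover have "(N + K * \<alpha> / 2) / card S0 = K * ((m + \<alpha> / 2) / (2 * m + 1))"
    unfolding card_S0 N by (simp add: field_simps)
  ultimately show ?thesis using S0_pure card_S0 by simp
qed

end
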